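(* Let $p$ be a prime, $n$ a natural number, and let $A$ be either a pre-Lie ring or a left brace of cardinality $p^n$ which is both left nilpotent and right nilpotent. Then $A^{[(n+1)^{n+1}]}=0$.
   Context: A (left) brace is a set $A$ with binary operations $+,\circ$ such that $(A,+)$ is an abelian group, $(A,\circ)$ is a group, and $a\circ(b+c)+a=a\circ b+a\circ c$; write $a*b=a\circ b-a-b$. A pre-Lie ring is an abelian group $(A,+)$ with a biadditive product $\cdot$ satisfying $(x\cdot y)\cdot z-x\cdot(y\cdot z)=(y\cdot x)\cdot z-y\cdot(x\cdot z)$. Let $\star$ denote $*$ for braces and $\cdot$ for pre-Lie rings; for additive subgroups $X,Y$, $X\star Y$ is the additive subgroup generated by $\{x\star y\}$. Set $A^1=A^{(1)}=A^{[1]}=A$, $A^{i+1}=A\star A^i$, $A^{(i+1)}=A^{(i)}\star A$, $A^{[i+1]}=\sum_{j=1}^{i}A^{[j]}\star A^{[i+1-j]}$. $A$ is left nilpotent if $A^m=0$ for some $m$, right nilpotent if $A^{(m)}=0$ for some $m$. *)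

theory Defs
  imports "HOL-Computational_Algebra.Primes"
begin

text \<open>The additive group (A,+) is the ambient type 'a :: ab_group_add (the whole type is A).\<close>

inductive_set add_span :: "'a::ab_group_add set \<Rightarrow> 'a set" for S where
  span_base: "x \<in> S \<Longrightarrow> x \<in> add_span S"
| span_zero: "0 \<in> add_span S"
| span_neg: "x \<in> add_span S \<Longrightarrow> - x \<in> add_span S"
| span_add: "x \<in> add_span S \<Longrightarrow> y \<in> add_span S \<Longrightarrow> x + y \<in> add_span S"

definition star_set :: "('a::ab_group_add \<Rightarrow> 'a \<Rightarrow> 'a) \<Rightarrow> 'a set \<Rightarrow> 'a set \<Rightarrow> 'a set" where
  "star_set op X Y = add_span {op x y | x y. x \<in> X \<and> y \<in> Y}"

text \<open>A^i (left powers), indexed from 1; index 0 is a dummy equal to A.\<close>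
fun left_pow :: "('a::ab_group_add \<Rightarrow> 'a \<Rightarrow> 'a) \<Rightarrow> nat \<Rightarrow> 'a set" where
  "left_pow op 0 = UNIV"
| "left_pow op (Suc 0) = UNIV"
| "left_pow op (Suc (Suc i)) = star_set op UNIV (left_pow op (Suc i))"

fun right_pow :: "('a::ab_group_add \<Rightarrow> 'a \<Rightarrow> 'a) \<Rightarrow> nat \<Rightarrow> 'a set" where
  "right_pow op 0 = UNIV"
| "right_pow op (Suc 0) = UNIV"
| "right_pow op (Suc (Suc i)) = star_set op (right_pow op (Suc i)) UNIV"

text \<open>A^[i]: A^[1] = A, A^[i+1] = sum over j=1..i of A^[j] \<star> A^[i+1-j].
  The sum of additive subgroups is the subgroup generated by their union.\<close>
function strong_pow :: "('a::ab_group_add \<Rightarrow> 'a \<Rightarrow> 'a) \<Rightarrow> nat \<Rightarrow> 'a set" where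
  "strong_pow op 0 = UNIV"
| "strong_pow op (Suc i) = (if i = 0 then UNIV else
     add_span (\<Union>j\<in>{1..i}. star_set op (strong_pow op j) (strong_pow op (Suc i - j))))"
  by pat_completeness auto
termination by (relation "measure (\<lambda>(_, i). i)") auto

definition left_nilpotent :: "('a::ab_group_add \<Rightarrow> 'a \<Rightarrow> 'a) \<Rightarrow> bool" where
  "left_nilpotent op \<longleftrightarrow> (\<exists>m. left_pow op m = {0})"

definition right_nilpotent :: "('a::ab_group_add \<Rightarrow> 'a \<Rightarrow> 'a) \<Rightarrow> bool" where
  "right_nilpotent op \<longleftrightarrow> (\<exists>m. right_pow op m = {0})"

definition pre_lie_ring :: "('a::ab_group_add \<Rightarrow> 'a \<Rightarrow> 'a) \<Rightarrow> bool" where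
  "pre_lie_ring pr \<longleftrightarrow>
     (\<forall>x y z. pr (x + y) z = pr x z + pr y z) \<and>
     (\<forall>x y z. pr x (y + z) = pr x y + pr x z) \<and>
     (\<forall>x y z. pr (pr x y) z - pr x (pr y z) = pr (pr y x) z - pr y (pr x z))"

definition brace :: "('a::ab_group_add \<Rightarrow> 'a \<Rightarrow> 'a) \<Rightarrow> bool" where
  "brace circ \<longleftrightarrow>
     (\<forall>a b c. circ (circ a b) c = circ a (circ b c)) \<and>
     (\<exists>e. (\<forall>a. circ e a = a \<and> circ a e = a) \<and> (\<forall>a. \<exists>b. circ a b = e \<and> circ b a = e)) \<and>
     (\<forall>a b c. circ a (b + c) + a = circ a b + circ a c)"

definition brace_star :: "('a::ab_group_add \<Rightarrow> 'a \<Rightarrow> 'a) \<Rightarrow> 'a \<Rightarrow> 'a \<Rightarrow> 'a" where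
  "brace_star circ a b = circ a b - a - b"

end

(* All the sets A^{i}, A^(i), A^[i] are additive subgroups, so by Lagrange their orders are
   powers of p. The chains A^{i} and A^(i) arise by iterating a monotone map on subgroups, so at
   each step the order drops by a factor p unless the chain is stationary from there on; hence
   nilpotency gives A^{n+1} = A^(n+1) = 0.

   The right powers A^(j) are left ideals: for pre-Lie rings by the pre-Lie identity, for braces
   because the additive maps lambda_a x = a o x - a satisfy
   lambda_a (w * c) = (a o w o a') * lambda_a c  and  a o w o a' = lambda_a (w + w * a'),
   where a' is the inverse of a.

   Finally A^[m] is contained in A^(j) for m >= (n+1)^j, by induction on j. With G = (n+1)^j,
   consider a generator x * y of A^[m], m > qG: either x has degree >= G, so x * y lies in
   A^(j+1), or y has degree > (q-1)G. By induction on q this gives A^[m] <= A^(j+1) + A^{q+1},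
   and q = n yields A^[m] <= A^(j+1). *)

theory Submission
  imports Defs "HOL.Modules" "HOL-Algebra.Coset" "HOL-Library.Set_Algebras"
begin

definition add_subgroup :: "'a::ab_group_add set \<Rightarrow> bool" where
  "add_subgroup H \<longleftrightarrow> 0 \<in> H \<and> (\<forall>x\<in>H. - x \<in> H) \<and> (\<forall>x\<in>H. \<forall>y\<in>H. x + y \<in> H)"

lemma add_subgroup_zero: "add_subgroup H \<Longrightarrow> 0 \<in> H"
  and add_subgroup_minus: "add_subgroup H \<Longrightarrow> x \<in> H \<Longrightarrow> - x \<in> H"
  and add_subgroup_add: "add_subgroup H \<Longrightarrow> x \<in> H \<Longrightarrow> y \<in> H \<Longrightarrow> x + y \<in> H"
  by (simp_all add: add_subgroup_def)

lemma add_subgroup_diff: "add_subgroup H \<Longrightarrow> x \<in> H \<Longrightarrow> y \<in> H \<Longrightarrow> x - y \<in> H"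
  by (metis add_subgroup_add add_subgroup_minus diff_conv_add_uminus)

lemma add_subgroup_UNIV: "add_subgroup UNIV"
  by (simp add: add_subgroup_def)

lemma add_subgroup_set_plus:
  assumes "add_subgroup H" "add_subgroup K"
  shows "add_subgroup (H + K)"
  unfolding add_subgroup_def
proof (intro conjI ballI)
  show "0 \<in> H + K"
    using set_plus_intro[OF add_subgroup_zero add_subgroup_zero] assms by fastforce
next
  fix z assume "z \<in> H + K"
  then obtain x y where "z = x + y" "x \<in> H" "y \<in> K" by (auto elim: set_plus_elim)
  then show "- z \<in> H + K"
    using set_plus_intro[of "- x" H "- y" K] assms by (simp add: add_subgroup_minus)
next
  fix z w assume "z \<in> H + K" "w \<in> H + K"
  then obtain x y x' y' where "z = x + y" "w = x' + y'" "x \<in> H" "x' \<in> H" "y \<in> K" "y' \<in> K"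
    by (auto elim!: set_plus_elim)
  then show "z + w \<in> H + K"
    using set_plus_intro[of "x + x'" H "y + y'" K] assms by (simp add: add_subgroup_add algebra_simps)
qed

lemma card_add_subgroup_dvd:
  assumes "add_subgroup (H :: 'a::ab_group_add set)"
  shows "card H dvd card (UNIV :: 'a set)"
proof -
  let ?G = "\<lparr>carrier = (UNIV :: 'a set), monoid.mult = (+), one = 0\<rparr>"
  have group: "group ?G"
    by (rule groupI) (auto simp: add.assoc intro: exI[of _ "- x" for x])
  have inv: "inv\<^bsub>?G\<^esub> a = - a" for a
    using group.inv_equality[OF group, of "- a" a] by simp
  have "subgroup H ?G"
    using assms by (intro group.subgroupI[OF group]) (auto simp: inv add_subgroup_def)
  from group.lagrange[OF group this] show ?thesis
    by (simp add: order_def) (metis dvd_triv_right)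
qed

lemma finite_UNIV_card_prime_power:
  assumes "prime p" "card (UNIV :: 'a set) = p ^ n"
  shows "finite (UNIV :: 'a set)"
  using assms by (intro card_ge_0_finite) (simp add: prime_gt_0_nat)

lemma card_add_subgroup_prime_power:
  assumes "prime p" "card (UNIV :: 'a::ab_group_add set) = p ^ n" "add_subgroup (H :: 'a set)"
  shows "\<exists>e. card H = p ^ e"
  using card_add_subgroup_dvd[OF assms(3)] assms(1,2) divides_primepow_nat by auto

lemma card_add_subgroup_psubset:
  fixes H K :: "'a::ab_group_add set"
  assumes "prime p" "card (UNIV :: 'a set) = p ^ n"
    and "add_subgroup H" "add_subgroup K" "H \<subset> K"
  shows "p * card H \<le> card K"
proof -
  have "1 < p" using assms(1) prime_gt_1_nat by blast
  obtain e f where e: "card H = p ^ e" and f: "card K = p ^ f"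
    using card_add_subgroup_prime_power[OF assms(1,2)] assms(3,4) by blast
  have "finite K"
    using finite_UNIV_card_prime_power[OF assms(1,2)] by (rule finite_subset[rotated]) simp
  then have "card H < card K" using assms(5) by (rule psubset_card_mono)
  then have "Suc e \<le> f" using e f \<open>1 < p\<close> by (simp add: power_strict_increasing_iff)
  then have "p ^ Suc e \<le> p ^ f" using \<open>1 < p\<close> by (intro power_increasing) simp_all
  then show ?thesis by (simp add: e f)
qed

lemma funpow_UNIV_eq_zero:
  fixes F :: "'a::ab_group_add set \<Rightarrow> 'a set"
  assumes p: "prime p" and card: "card (UNIV :: 'a set) = p ^ n"
    and "mono F" and subgroup_F: "\<And>H. add_subgroup H \<Longrightarrow> add_subgroup (F H)"
    and zero: "(F ^^ m) UNIV = {0}"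
  shows "(F ^^ n) UNIV = {0}"
proof -
  define Y where "Y i = (F ^^ i) UNIV" for i
  have "1 < p" using p prime_gt_1_nat by blast
  have finite: "finite (Y i)" for i
    using finite_UNIV_card_prime_power[OF p card] by (rule finite_subset[rotated]) simp
  have subgroup: "add_subgroup (Y i)" for i
    by (induction i) (simp_all add: Y_def add_subgroup_UNIV subgroup_F)
  have antimono: "i \<le> j \<Longrightarrow> Y j \<subseteq> Y i" for i j
    unfolding Y_def using funpow_increasing[OF _ \<open>mono F\<close>] by blast
  have stationary: "Y i \<subseteq> {0}" if "Y (Suc i) = Y i" for i
  proof -
    have "Y (k + i) = Y i" for k
      by (induction k) (use that in \<open>simp_all add: Y_def\<close>)
    then have "Y i = Y (m + i)" by simp
    also have "\<dots> \<subseteq> Y m" by (rule antimono) simp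
    finally show ?thesis by (simp add: Y_def zero)
  qed
  have card_Y: "card (Y i) \<le> p ^ (n - i)" for i
  proof (induction i)
    case 0
    then show ?case by (simp add: Y_def card)
  next
    case (Suc i)
    show ?case
    proof (cases "Y (Suc i) = Y i")
      case True
      then have "Y (Suc i) \<subseteq> {0}" using stationary by simp
      then have "card (Y (Suc i)) \<le> card {0 :: 'a}" by (rule card_mono[rotated]) simp
      moreover have "1 \<le> p ^ (n - Suc i)" using \<open>1 < p\<close> by (simp add: one_le_power)
      ultimately show ?thesis by simp
    next
      case False
      then have "Y (Suc i) \<subset> Y i" using antimono[of i "Suc i"] by auto
      then have "p * card (Y (Suc i)) \<le> card (Y i)"
        by (rule card_add_subgroup_psubset[OF p card subgroup subgroup])
      also have "\<dots> \<le> p ^ (n - i)" by (rule Suc.IH)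
      finally have "p * card (Y (Suc i)) \<le> p ^ (n - i)" .
      then show ?thesis
      proof (cases "n - i")
        case 0
        with \<open>p * card (Y (Suc i)) \<le> p ^ (n - i)\<close> \<open>1 < p\<close> show ?thesis
          by (cases "card (Y (Suc i))") simp_all
      next
        case (Suc k)
        then have "n - Suc i = k" by simp
        with Suc \<open>p * card (Y (Suc i)) \<le> p ^ (n - i)\<close> \<open>1 < p\<close> show ?thesis by simp
      qed
    qed
  qed
  from card_Y[of n] have "card (Y n) \<le> Suc 0" by simp
  then have "Y n = {0}"
    using add_subgroup_zero[OF subgroup] card_le_Suc0_iff_eq[OF finite] by blast
  then show ?thesis by (simp add: Y_def)
qed

lemma add_subgroup_add_span: "add_subgroup (add_span S)"
  unfolding add_subgroup_def by (auto intro: add_span.intros)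

lemma add_span_subset:
  assumes "add_subgroup H" "S \<subseteq> H"
  shows "add_span S \<subseteq> H"
proof
  fix x assume "x \<in> add_span S"
  then show "x \<in> H"
    by induction (use assms in \<open>auto simp: add_subgroup_def\<close>)
qed

lemma additive_image_add_span:
  assumes "additive f" "add_subgroup H" "f ` S \<subseteq> H"
  shows "f ` add_span S \<subseteq> H"
proof
  fix y assume "y \<in> f ` add_span S"
  then obtain x where "x \<in> add_span S" "y = f x" by blast
  from this(1) have "f x \<in> H"
  proof induction
    case span_zero
    show ?case using assms(1,2) by (simp add: additive.zero add_subgroup_zero)
  next
    case (span_neg x)
    then show ?case using assms(1,2) by (simp add: additive.minus add_subgroup_minus)
  next
    case (span_add x y)
    then show ?case using assms(1,2) by (simp add: additive.add add_subgroup_add)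
  qed (use assms(3) in blast)
  then show "y \<in> H" using \<open>y = f x\<close> by simp
qed

lemma star_set_memI: "x \<in> X \<Longrightarrow> y \<in> Y \<Longrightarrow> op x y \<in> star_set op X Y"
  unfolding star_set_def by (rule span_base) blast

lemma add_subgroup_star_set: "add_subgroup (star_set op X Y)"
  unfolding star_set_def by (rule add_subgroup_add_span)

lemma star_set_subset:
  "add_subgroup H \<Longrightarrow> (\<And>x y. x \<in> X \<Longrightarrow> y \<in> Y \<Longrightarrow> op x y \<in> H) \<Longrightarrow> star_set op X Y \<subseteq> H"
  unfolding star_set_def by (rule add_span_subset) auto

lemma star_set_mono: "X \<subseteq> X' \<Longrightarrow> Y \<subseteq> Y' \<Longrightarrow> star_set op X Y \<subseteq> star_set op X' Y'"
  by (rule star_set_subset[OF add_subgroup_star_set]) (auto intro: star_set_memI)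

lemma left_pow_Suc: "0 < i \<Longrightarrow> left_pow op (Suc i) = star_set op UNIV (left_pow op i)"
  by (cases i) auto

lemma right_pow_Suc: "0 < i \<Longrightarrow> right_pow op (Suc i) = star_set op (right_pow op i) UNIV"
  by (cases i) auto

lemma left_pow_funpow: "left_pow op (Suc i) = (star_set op UNIV ^^ i) UNIV"
  by (induction i) (simp_all add: left_pow_Suc)

lemma right_pow_funpow: "right_pow op (Suc i) = ((\<lambda>X. star_set op X UNIV) ^^ i) UNIV"
  by (induction i) (simp_all add: right_pow_Suc)

lemma add_subgroup_left_pow: "add_subgroup (left_pow op i)"
  by (cases "(op, i)" rule: left_pow.cases) (simp_all add: add_subgroup_UNIV add_subgroup_star_set)

lemma add_subgroup_right_pow: "add_subgroup (right_pow op i)"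
  by (cases "(op, i)" rule: right_pow.cases) (simp_all add: add_subgroup_UNIV add_subgroup_star_set)

lemma add_subgroup_strong_pow: "add_subgroup (strong_pow op i)"
  by (cases i) (auto simp: add_subgroup_UNIV add_subgroup_add_span)

lemma right_pow_Suc_subset: "right_pow op (Suc i) \<subseteq> right_pow op i"
proof (cases i)
  case (Suc j)
  have "mono (\<lambda>X. star_set op X UNIV)" by (intro monoI star_set_mono) simp_all
  then show ?thesis
    using funpow_increasing[of j i] by (simp add: Suc right_pow_funpow del: funpow.simps)
qed simp

lemma right_pow_star_memI: "u \<in> right_pow op i \<Longrightarrow> op u z \<in> right_pow op i"
proof (cases i)
  case (Suc j)
  assume "u \<in> right_pow op i"
  then have "op u z \<in> right_pow op (Suc i)" by (simp add: Suc right_pow_Suc star_set_memI)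
  then show ?thesis using right_pow_Suc_subset by blast
qed simp

lemma left_pow_eq_zero:
  fixes op :: "'a::ab_group_add \<Rightarrow> 'a \<Rightarrow> 'a"
  assumes "prime p" "card (UNIV :: 'a set) = p ^ n" "left_nilpotent op"
  shows "left_pow op (Suc n) = {0}"
proof -
  obtain m where "left_pow op (Suc m) = {0}"
    using assms(3) unfolding left_nilpotent_def by (metis left_pow.simps(1,2) not0_implies_Suc)
  then show ?thesis
    using funpow_UNIV_eq_zero[OF assms(1,2), of "star_set op UNIV" m]
    by (simp add: left_pow_funpow monoI star_set_mono add_subgroup_star_set)
qed

lemma right_pow_eq_zero:
  fixes op :: "'a::ab_group_add \<Rightarrow> 'a \<Rightarrow> 'a"
  assumes "prime p" "card (UNIV :: 'a set) = p ^ n" "right_nilpotent op"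
  shows "right_pow op (Suc n) = {0}"
proof -
  obtain m where "right_pow op (Suc m) = {0}"
    using assms(3) unfolding right_nilpotent_def by (metis right_pow.simps(1,2) not0_implies_Suc)
  then show ?thesis
    using funpow_UNIV_eq_zero[OF assms(1,2), of "\<lambda>X. star_set op X UNIV" m]
    by (simp add: right_pow_funpow monoI star_set_mono add_subgroup_star_set)
qed

text \<open>For braces the induction step needs the hypothesis for all maps \<open>\<lambda>\<^sub>a\<close> at once, hence
  a family \<open>G\<close> of maps.\<close>

lemma additive_family_preserves_right_pow:
  assumes additive: "\<And>g. g \<in> G \<Longrightarrow> additive g"
    and step: "\<And>i g u z. 0 < i \<Longrightarrow> (\<And>g w. g \<in> G \<Longrightarrow> w \<in> right_pow op i \<Longrightarrow> g w \<in> right_pow op i)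
      \<Longrightarrow> g \<in> G \<Longrightarrow> u \<in> right_pow op i \<Longrightarrow> g (op u z) \<in> right_pow op (Suc i)"
  shows "g \<in> G \<Longrightarrow> w \<in> right_pow op j \<Longrightarrow> g w \<in> right_pow op j"
proof (induction j arbitrary: g w)
  case (Suc i)
  show ?case
  proof (cases "i = 0")
    case False
    have "g ` star_set op (right_pow op i) UNIV \<subseteq> right_pow op (Suc i)"
      unfolding star_set_def
      using Suc step[of i] False by (intro additive_image_add_span additive add_subgroup_right_pow) auto
    then show ?thesis using Suc.prems False by (auto simp: right_pow_Suc)
  qed simp
qed simp

lemma pre_lie_right_pow_left_ideal:
  assumes "pre_lie_ring pr" "w \<in> right_pow pr j"
  shows "pr a w \<in> right_pow pr j"
proof -
  have distrib: "pr x (y + z) = pr x y + pr x z"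
    and pre_lie: "pr (pr x y) z - pr x (pr y z) = pr (pr y x) z - pr y (pr x z)" for x y z
    using assms(1) unfolding pre_lie_ring_def by blast+
  show ?thesis
  proof (rule additive_family_preserves_right_pow[where G = "range pr", OF _ _ rangeI assms(2)])
    show "additive g" if "g \<in> range pr" for g
      using that distrib by (auto simp: additive_def)
  next
    fix i g u z
    assume i: "0 < i" and IH: "\<And>g w. g \<in> range pr \<Longrightarrow> w \<in> right_pow pr i \<Longrightarrow> g w \<in> right_pow pr i"
      and "g \<in> range pr" and u: "u \<in> right_pow pr i"
    then obtain b where g: "g = pr b" by blast
    have "pr b u \<in> right_pow pr i" and "pr u b \<in> right_pow pr i"
      using IH u right_pow_star_memI by auto
    then have "pr (pr b u) z \<in> right_pow pr (Suc i)" "pr (pr u b) z \<in> right_pow pr (Suc i)"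
      "pr u (pr b z) \<in> right_pow pr (Suc i)"
      using u i by (simp_all add: right_pow_Suc star_set_memI)
    moreover have "pr b (pr u z) = pr (pr b u) z - pr (pr u b) z + pr u (pr b z)"
      using pre_lie[of b u z] by (simp add: algebra_simps)
    ultimately show "g (pr u z) \<in> right_pow pr (Suc i)"
      unfolding g by (simp add: add_subgroup_right_pow add_subgroup_add add_subgroup_diff)
  qed
qed

definition brace_lambda :: "('a::ab_group_add \<Rightarrow> 'a \<Rightarrow> 'a) \<Rightarrow> 'a \<Rightarrow> 'a \<Rightarrow> 'a" where
  "brace_lambda circ a x = circ a x - a"

context
  fixes circ :: "'a::ab_group_add \<Rightarrow> 'a \<Rightarrow> 'a"
  assumes brace: "brace circ"
begin

lemma brace_assoc: "circ (circ a b) c = circ a (circ b c)"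
  and brace_distrib: "circ a (b + c) + a = circ a b + circ a c"
  using brace unfolding brace_def by blast+

lemma brace_zero_right: "circ a 0 = a"
  using brace_distrib[of a 0 0] by simp

lemma brace_inverse: "\<exists>a'. circ a a' = 0 \<and> circ a' a = 0"
proof -
  obtain e where "\<And>a. circ e a = a \<and> circ a e = a" "\<And>a. \<exists>b. circ a b = e \<and> circ b a = e"
    using brace unfolding brace_def by blast
  moreover from this have "e = 0" using brace_zero_right[of e] by metis
  ultimately show ?thesis by metis
qed

lemma additive_brace_lambda: "additive (brace_lambda circ a)"
  unfolding additive_def brace_lambda_def
  using brace_distrib by (simp add: algebra_simps eq_diff_eq)

lemma brace_lambda_circ: "brace_lambda circ (circ a b) c = brace_lambda circ a (brace_lambda circ b c)"
  using additive.diff[OF additive_brace_lambda, of a "circ b c" b]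
  by (simp add: brace_lambda_def brace_assoc)

lemma brace_star_eq_lambda: "brace_star circ a b = brace_lambda circ a b - b"
  by (simp add: brace_star_def brace_lambda_def)

lemma brace_star_right_distrib: "brace_star circ a (b + c) = brace_star circ a b + brace_star circ a c"
  using additive.add[OF additive_brace_lambda] by (simp add: brace_star_eq_lambda algebra_simps)

lemma brace_lambda_star:
  assumes "circ a' a = 0"
  shows "brace_lambda circ a (brace_star circ w c)
    = brace_star circ (circ (circ a w) a') (brace_lambda circ a c)"
proof -
  have "circ (circ (circ a w) a') a = circ a w"
    using assms by (simp add: brace_assoc brace_zero_right)
  then show ?thesis
    using additive.diff[OF additive_brace_lambda]
    by (simp add: brace_star_eq_lambda brace_lambda_circ[symmetric])
qed

lemma brace_conjugate_eq_lambda: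
  assumes "circ a a' = 0"
  shows "circ (circ a w) a' = brace_lambda circ a (w + brace_star circ w a')"
proof -
  have "w + brace_star circ w a' = circ w a' - a'" by (simp add: brace_star_def)
  then show ?thesis
    using assms additive.diff[OF additive_brace_lambda]
    by (simp add: brace_lambda_def brace_assoc)
qed

lemma brace_right_pow_left_ideal:
  assumes "w \<in> right_pow (brace_star circ) j"
  shows "brace_star circ a w \<in> right_pow (brace_star circ) j"
proof -
  let ?star = "brace_star circ"
  have "brace_lambda circ a w \<in> right_pow ?star j"
  proof (rule additive_family_preserves_right_pow[OF _ _ _ assms])
    show "additive g" if "g \<in> range (brace_lambda circ)" for g
      using that additive_brace_lambda by blast
  next
    fix i g u z
    assume IH: "\<And>g w. g \<in> range (brace_lambda circ) \<Longrightarrow> w \<in> right_pow ?star i \<Longrightarrow> g w \<in> right_pow ?star i"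
      and "0 < i" "g \<in> range (brace_lambda circ)" and u: "u \<in> right_pow ?star i"
    then obtain b where g: "g = brace_lambda circ b" by blast
    obtain b' where b': "circ b b' = 0" "circ b' b = 0" using brace_inverse by blast
    have "u + ?star u b' \<in> right_pow ?star i"
      by (intro add_subgroup_add[OF add_subgroup_right_pow] u right_pow_star_memI)
    then have "circ (circ b u) b' \<in> right_pow ?star i"
      using IH[of "brace_lambda circ b"] by (simp add: brace_conjugate_eq_lambda[OF b'(1)])
    then show "g (?star u z) \<in> right_pow ?star (Suc i)"
      using \<open>0 < i\<close> by (simp add: g brace_lambda_star[OF b'(2)] right_pow_Suc star_set_memI)
  qed simp
  then show ?thesis
    using assms by (simp add: brace_star_eq_lambda add_subgroup_right_pow add_subgroup_diff)
qed

end

lemma strong_pow_subset_right_pow_plus_left_pow: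
  fixes op :: "'a::ab_group_add \<Rightarrow> 'a \<Rightarrow> 'a"
  assumes distrib: "\<And>x y z. op x (y + z) = op x y + op x z"
    and ideal: "\<And>a w. w \<in> right_pow op (Suc j) \<Longrightarrow> op a w \<in> right_pow op (Suc j)"
    and "0 < j" "0 < G"
    and deep: "\<And>m. G \<le> m \<Longrightarrow> strong_pow op m \<subseteq> right_pow op j"
    and "q * G < m"
  shows "strong_pow op m \<subseteq> right_pow op (Suc j) + left_pow op (Suc q)"
  using \<open>q * G < m\<close>
proof (induction q arbitrary: m)
  case 0
  have "0 + x \<in> right_pow op (Suc j) + left_pow op (Suc 0)" for x
    by (intro set_plus_intro add_subgroup_zero add_subgroup_right_pow) simp
  then show ?case unfolding add_0 by blast
next
  case (Suc q)
  let ?T = "right_pow op (Suc j) + left_pow op (Suc (Suc q))"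
  have T: "add_subgroup ?T"
    by (intro add_subgroup_set_plus add_subgroup_right_pow add_subgroup_left_pow)
  have "G + q * G < m" using Suc.prems by simp
  then obtain i where m: "m = Suc i" "0 < i"
    using \<open>0 < G\<close> by (cases m) auto
  have "op x y \<in> ?T" if a: "a \<in> {1..i}" and x: "x \<in> strong_pow op a"
    and y: "y \<in> strong_pow op (Suc i - a)" for a x y
  proof (cases "G \<le> a")
    case True
    then have "x \<in> right_pow op j" using deep x by blast
    then have "op x y \<in> right_pow op (Suc j)"
      using \<open>0 < j\<close> by (simp add: right_pow_Suc star_set_memI)
    then have "op x y + 0 \<in> ?T"
      by (intro set_plus_intro add_subgroup_zero add_subgroup_left_pow)
    then show ?thesis by simp
  next
    case False
    then have "q * G < Suc i - a" using \<open>G + q * G < m\<close> m a by simp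
    then have "y \<in> right_pow op (Suc j) + left_pow op (Suc q)" using y Suc.IH by blast
    then obtain u v where "y = u + v" "u \<in> right_pow op (Suc j)" "v \<in> left_pow op (Suc q)"
      by (rule set_plus_elim)
    then have "op x y = op x u + op x v"
      and "op x u \<in> right_pow op (Suc j)" "op x v \<in> left_pow op (Suc (Suc q))"
      by (simp_all add: distrib ideal star_set_memI)
    then show ?thesis by (simp only: set_plus_intro)
  qed
  then have "(\<Union>a\<in>{1..i}. star_set op (strong_pow op a) (strong_pow op (Suc i - a))) \<subseteq> ?T"
    by (intro UN_least star_set_subset[OF T])
  then have "add_span (\<Union>a\<in>{1..i}. star_set op (strong_pow op a) (strong_pow op (Suc i - a))) \<subseteq> ?T"
    by (rule add_span_subset[OF T])
  then show ?case using m by simp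
qed

lemma strong_pow_subset_right_pow:
  fixes op :: "'a::ab_group_add \<Rightarrow> 'a \<Rightarrow> 'a"
  assumes distrib: "\<And>x y z. op x (y + z) = op x y + op x z"
    and ideal: "\<And>j a w. w \<in> right_pow op j \<Longrightarrow> op a w \<in> right_pow op j"
    and left_zero: "left_pow op (Suc k) = {0}"
  shows "(k + 1) ^ j \<le> m \<Longrightarrow> strong_pow op m \<subseteq> right_pow op j"
proof (induction j arbitrary: m)
  case (Suc j)
  show ?case
  proof (cases "j = 0")
    case False
    have "(k + 1) ^ Suc j = (k + 1) ^ j + k * (k + 1) ^ j" "0 < (k + 1) ^ j" by simp_all
    then have "k * (k + 1) ^ j < m" using Suc.prems by linarith
    then have "strong_pow op m \<subseteq> right_pow op (Suc j) + left_pow op (Suc k)"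
      using False Suc.IH by (intro strong_pow_subset_right_pow_plus_left_pow distrib ideal) auto
    then show ?thesis by (simp add: left_zero)
  qed simp
qed simp

lemma strong_pow_eq_zero:
  fixes op :: "'a::ab_group_add \<Rightarrow> 'a \<Rightarrow> 'a"
  assumes "\<And>x y z. op x (y + z) = op x y + op x z"
    and "\<And>j a w. w \<in> right_pow op j \<Longrightarrow> op a w \<in> right_pow op j"
    and "left_pow op (Suc k) = {0}" "right_pow op r = {0}"
  shows "strong_pow op ((k + 1) ^ r) = {0}"
  using strong_pow_subset_right_pow[OF assms(1-3) order_refl] assms(4)
    add_subgroup_zero[OF add_subgroup_strong_pow] by blast

theorem corollary19:
  fixes p n :: nat
  assumes "prime p" and "card (UNIV :: 'a set) = p ^ n"
  shows "(\<forall>pr :: 'a::ab_group_add \<Rightarrow> 'a \<Rightarrow> 'a. pre_lie_ring pr \<and> left_nilpotent pr \<and> right_nilpotent pr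
            \<longrightarrow> strong_pow pr ((n + 1) ^ (n + 1)) = {0})
       \<and> (\<forall>circ :: 'a \<Rightarrow> 'a \<Rightarrow> 'a. brace circ \<and> left_nilpotent (brace_star circ)
            \<and> right_nilpotent (brace_star circ)
            \<longrightarrow> strong_pow (brace_star circ) ((n + 1) ^ (n + 1)) = {0})"
proof (intro conjI allI impI; elim conjE)
  fix pr :: "'a \<Rightarrow> 'a \<Rightarrow> 'a"
  assume "pre_lie_ring pr" "left_nilpotent pr" "right_nilpotent pr"
  then show "strong_pow pr ((n + 1) ^ (n + 1)) = {0}"
    using left_pow_eq_zero[OF assms] right_pow_eq_zero[OF assms]
    by (intro strong_pow_eq_zero pre_lie_right_pow_left_ideal) (auto simp: pre_lie_ring_def)
next
  fix circ :: "'a \<Rightarrow> 'a \<Rightarrow> 'a"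
  assume "brace circ" "left_nilpotent (brace_star circ)" "right_nilpotent (brace_star circ)"
  then show "strong_pow (brace_star circ) ((n + 1) ^ (n + 1)) = {0}"
    using left_pow_eq_zero[OF assms] right_pow_eq_zero[OF assms]
    by (intro strong_pow_eq_zero brace_star_right_distrib brace_right_pow_left_ideal) auto
qed

end
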